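(* Let $\tau\subset\mathbb{Z}^n_{\ge0}$ be a B-facet which contains a standard basis vector $e_i$ (the point with $i$-th coordinate $1$ and all others $0$). Then $\tau$ is a $B_1$-facet: every point of $\tau$ other than $e_i$ has $i$-th coordinate $0$.
   Context: A $k$-simplex is a set of $k+1$ affinely independent points. A $k$-simplex $S\subset\mathbb{Z}^n_{\ge0}$ is a B-simplex if there is a coordinate index $i$ such that exactly $k$ of its vertices lie in $\{x_i=0\}$ and the remaining vertex has $i$-th coordinate $1$. A B-facet in $\mathbb{Z}^n_{\ge0}$ is a finite set $\tau\subset\mathbb{Z}^n_{\ge 0}$ whose affine span is a hyperplane $\{x:\langle a,x\rangle=b\}$ with all $a_j>0$, such that every $(n-1)$-simplex with vertices in $\tau$ is a B-simplex. A $B_1$-facet is one for which there is an index $i$ such that exactly one point of $\tau$ has nonzero $i$-th coordinate, that coordinate being $1$. *)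

theory Defs
  imports "HOL-Analysis.Analysis"
begin

text \<open>Points of Z^n_{>=0} are modelled as vectors in real^'n whose coordinates
are natural numbers; n = CARD('n).\<close>

definition lattice_nonneg :: "(real ^ 'n) set" where
  "lattice_nonneg = {x. \<forall>j. x $ j \<in> \<nat>}"

definition is_simplex :: "nat \<Rightarrow> (real ^ 'n) set \<Rightarrow> bool" where
  "is_simplex k S \<longleftrightarrow> finite S \<and> card S = k + 1 \<and> \<not> affine_dependent S"

definition B_simplex :: "nat \<Rightarrow> (real ^ 'n) set \<Rightarrow> bool" where
  "B_simplex k S \<longleftrightarrow> is_simplex k S \<and> S \<subseteq> lattice_nonneg \<and>
     (\<exists>i. card {v\<in>S. v $ i = 0} = k \<and> (\<forall>v\<in>S. v $ i \<noteq> 0 \<longrightarrow> v $ i = 1))"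

definition B_facet :: "(real ^ 'n) set \<Rightarrow> bool" where
  "B_facet \<tau> \<longleftrightarrow> finite \<tau> \<and> \<tau> \<subseteq> lattice_nonneg \<and>
     (\<exists>a b. (\<forall>j. a $ j > 0) \<and> affine hull \<tau> = {x. inner a x = b}) \<and>
     (\<forall>S. S \<subseteq> \<tau> \<and> is_simplex (CARD('n) - 1) S \<longrightarrow> B_simplex (CARD('n) - 1) S)"

definition B1_facet :: "(real ^ 'n) set \<Rightarrow> bool" where
  "B1_facet \<tau> \<longleftrightarrow> B_facet \<tau> \<and>
     (\<exists>i. card {v\<in>\<tau>. v $ i \<noteq> 0} = 1 \<and> (\<forall>v\<in>\<tau>. v $ i \<noteq> 0 \<longrightarrow> v $ i = 1))"

end

theory Submission
  imports Defs
begin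

text \<open>The hyperplane \<open>\<langle>a, x\<rangle> = b\<close> of \<open>\<tau>\<close> passes through \<open>e\<^sub>i\<close>, so \<open>b = a\<^sub>i\<close>. Since all
  \<open>a\<^sub>j\<close> are positive and lattice points are nonnegative, a point \<open>x\<close> of \<open>\<tau>\<close> with \<open>x\<^sub>i \<ge> 1\<close>
  already spends the whole budget \<open>a\<^sub>i\<close> on its \<open>i\<close>-th coordinate: \<open>x\<^sub>i = 1\<close> and all other
  coordinates vanish, i.e. \<open>x = e\<^sub>i\<close>. Integrality leaves \<open>x\<^sub>i = 0\<close> for every other point.\<close>

lemma nonneg_eq_axis_if_inner_le:
  fixes a x :: "real ^ 'n" and i :: 'n
  assumes a_pos: "\<And>j. a $ j > 0" and x_nonneg: "\<And>j. x $ j \<ge> 0"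
    and inner_le: "inner a x \<le> a $ i" and x_i: "x $ i \<ge> 1"
  shows "x = axis i 1"
proof -
  have terms_nonneg: "\<And>j. a $ j * x $ j \<ge> 0"
    using a_pos x_nonneg by (simp add: less_imp_le)
  have inner_sum: "inner a x = (\<Sum>j\<in>UNIV. a $ j * x $ j)"
    by (simp add: inner_vec_def)
  have partial_le: "(\<Sum>j\<in>{i, k}. a $ j * x $ j) \<le> a $ i" for k
  proof -
    have "(\<Sum>j\<in>{i, k}. a $ j * x $ j) \<le> (\<Sum>j\<in>UNIV. a $ j * x $ j)"
      by (rule sum_mono2) (auto simp: terms_nonneg)
    with inner_le inner_sum show ?thesis by simp
  qed
  have "a $ i * x $ i \<le> a $ i"
    using partial_le[of i] by simp
  with a_pos[of i] x_i have x_i_eq: "x $ i = 1"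
    by (simp add: mult_le_cancel_left1)
  have "x $ k = 0" if "k \<noteq> i" for k
  proof -
    have "a $ k * x $ k \<le> 0"
      using partial_le[of k] that x_i_eq by simp
    with a_pos[of k] x_nonneg[of k] show ?thesis
      by (simp add: mult_le_0_iff)
  qed
  with x_i_eq show ?thesis
    by (auto simp: vec_eq_iff axis_def)
qed

lemma lattice_nonneg_coord_nonneg: "x \<in> lattice_nonneg \<Longrightarrow> x $ j \<ge> 0"
  unfolding lattice_nonneg_def by (metis mem_Collect_eq Nats_cases of_nat_0_le_iff)

lemma lattice_nonneg_coord_ge_1:
  assumes "x \<in> lattice_nonneg" and "x $ j \<noteq> 0"
  shows "x $ j \<ge> 1"
proof -
  obtain m :: nat where "x $ j = real m"
    using assms(1) unfolding lattice_nonneg_def by (auto elim: Nats_cases)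
  with assms(2) show ?thesis by simp
qed

lemma B_facet_in_positive_hyperplane:
  assumes "B_facet \<tau>"
  obtains a b where "\<And>j. a $ j > 0" and "\<And>x. x \<in> \<tau> \<Longrightarrow> inner a x = b"
  using assms hull_subset[of \<tau> affine] unfolding B_facet_def by blast

lemma B_facet_coord_zero_if_axis_mem:
  assumes facet: "B_facet \<tau>" and axis_mem: "axis i 1 \<in> \<tau>"
    and x: "x \<in> \<tau>" "x \<noteq> axis i 1"
  shows "x $ i = 0"
proof (rule ccontr)
  assume x_i: "x $ i \<noteq> 0"
  obtain a b where a_pos: "\<And>j. a $ j > 0" and on_hyperplane: "\<And>y. y \<in> \<tau> \<Longrightarrow> inner a y = b"
    using B_facet_in_positive_hyperplane[OF facet] by blast
  have lattice: "x \<in> lattice_nonneg"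
    using facet x(1) unfolding B_facet_def by blast
  have "inner a x = a $ i"
    using on_hyperplane[OF x(1)] on_hyperplane[OF axis_mem] by (simp add: inner_axis)
  then have "x = axis i 1"
    using nonneg_eq_axis_if_inner_le[OF a_pos] lattice_nonneg_coord_nonneg[OF lattice]
      lattice_nonneg_coord_ge_1[OF lattice x_i] by simp
  with x(2) show False by contradiction
qed

theorem claim2p5:
  fixes \<tau> :: "(real ^ 'n) set" and i :: 'n
  assumes "B_facet \<tau>" and "axis i 1 \<in> \<tau>"
  shows "B1_facet \<tau> \<and> (\<forall>x\<in>\<tau>. x \<noteq> axis i 1 \<longrightarrow> x $ i = 0)"
proof -
  have others_zero: "\<forall>x\<in>\<tau>. x \<noteq> axis i 1 \<longrightarrow> x $ i = 0"
    using B_facet_coord_zero_if_axis_mem[OF assms] by blast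
  then have "{v\<in>\<tau>. v $ i \<noteq> 0} = {axis i 1}"
    using assms(2) by (auto simp: axis_def)
  with others_zero have "card {v\<in>\<tau>. v $ i \<noteq> 0} = 1 \<and> (\<forall>v\<in>\<tau>. v $ i \<noteq> 0 \<longrightarrow> v $ i = 1)"
    by (auto simp: axis_def)
  with assms(1) others_zero show ?thesis
    unfolding B1_facet_def by blast
qed

end
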